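(* Let $X$ be an abelian variety over a field $K$ of characteristic different from $2$, and let $G=\bar\rho_{2,X}(\mathrm{Gal}(K))\subset\mathrm{Aut}_{\mathbb F_2}(X_2)$. Assume: (a) $\dim X=2$; (b) $G\cong\mathbb A_5$; (c) $X_2$ is a simple $G$-module; (d) $\mathrm{End}_G(X_2)\cong\mathbb F_4$. Identify $\mathbb F_2$ with $\mathbb F_2\cdot\mathrm{Id}_{X_2}$ and $\mathbb F_4$ with $\mathrm{End}_G(X_2)$. Let $R$ be an $\mathbb F_2$-subalgebra of $\mathrm{End}_{\mathbb F_2}(X_2)$ containing $\mathrm{Id}_{X_2}$ such that $uRu^{-1}\subset R$ for all $u\in G$. Then $R$ equals one of: $\mathbb F_2$; $\mathbb F_4$; $\mathrm{End}_{\mathbb F_4}(X_2)$; $\mathrm{End}_{\mathbb F_2}(X_2)$.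
   Context: $X_2$ is the $4$-dimensional $\mathbb F_2$-vector space of points of order dividing $2$ of $X$ over an algebraic closure of $K$, and $\bar\rho_{2,X}:\mathrm{Gal}(K)\to\mathrm{Aut}_{\mathbb F_2}(X_2)$ is the Galois action. $X_2$ is regarded as an $\mathbb F_4$-vector space via $\mathrm{End}_G(X_2)\cong\mathbb F_4$. *)

theory Defs
  imports "HOL-Analysis.Analysis" "HOL-Library.Z2" "HOL-Algebra.Sym_Groups" "HOL-Algebra.Ring"
begin

text \<open>X_2 is modelled as the F_2-vector space bit^4 (bit = F_2); End_{F_2}(X_2) is the
  set of all 4x4 matrices over F_2, acting on column vectors via *v.\<close>

type_synonym vec2 = "bit ^ 4"
type_synonym end2 = "bit ^ 4 ^ 4"

definition mat_monoid :: "end2 set \<Rightarrow> end2 monoid" where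
  "mat_monoid G = \<lparr>carrier = G, mult = (**), one = mat 1\<rparr>"

definition mat_ring :: "end2 set \<Rightarrow> end2 ring" where
  "mat_ring C = \<lparr>carrier = C, mult = (**), one = mat 1, zero = 0, add = (+)\<rparr>"

text \<open>F_2-linear subspace of X_2 (over F_2 scalar multiplication is trivial).\<close>
definition f2_subspace :: "vec2 set \<Rightarrow> bool" where
  "f2_subspace W \<longleftrightarrow> 0 \<in> W \<and> (\<forall>x\<in>W. \<forall>y\<in>W. x + y \<in> W)"

definition simple_module :: "end2 set \<Rightarrow> bool" where
  "simple_module G \<longleftrightarrow>
     (\<forall>W. f2_subspace W \<and> (\<forall>g\<in>G. \<forall>w\<in>W. g *v w \<in> W) \<longrightarrow> W = {0} \<or> W = UNIV)"

text \<open>Centralizer of a set of matrices: End_G(X_2) for G, End_{F_4}(X_2) for F_4.\<close>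
definition centralizer :: "end2 set \<Rightarrow> end2 set" where
  "centralizer S = {M. \<forall>s\<in>S. M ** s = s ** M}"

definition f2_subalgebra :: "end2 set \<Rightarrow> bool" where
  "f2_subalgebra R \<longleftrightarrow> 0 \<in> R \<and> mat 1 \<in> R \<and>
     (\<forall>x\<in>R. \<forall>y\<in>R. x + y \<in> R \<and> x ** y \<in> R)"

end

theory Submission
  imports Defs
begin

text \<open>End_G(X_2) = F_4 = {0, 1, w, w + 1} with w * w = w + 1 makes X_2 a plane over F_4. In an
  F_4-basis every F_2-endomorphism is uniquely v \<mapsto> A v + B v^\<sigma> with A, B 2x2 matrices over
  F_4 and \<sigma> the Frobenius, and End_{F_4}(X_2) is the part B = 0. G commutes with w, so
  G \<subseteq> GL_2(F_4); since A_5 is perfect, det is trivial on G, and |SL_2(F_4)| = 60 forces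
  G = SL_2(F_4). The SL_2(F_4)-stable subalgebras are then found by computation in this model:
  a fixed sum of nine SL_2(F_4)-conjugates maps (A, B) to (A, 0); the conjugates of a non-scalar
  (A, 0) generate all of M_2(F_4); a nonzero (0, B) yields a non-scalar (A, 0) by multiplication;
  and M_2(F_4) together with a nonzero (0, B) generates everything.\<close>

section \<open>The field with four elements\<close>

text \<open>W4 is a root \<omega> of x^2 + x + 1, and V4 = \<omega>^2 = \<omega> + 1.\<close>

datatype f4 = Z4 | O4 | W4 | V4

instantiation f4 :: field
begin
definition zero_f4 :: f4 where "zero_f4 = Z4"
definition one_f4 :: f4 where "one_f4 = O4"
fun plus_f4 :: "f4 \<Rightarrow> f4 \<Rightarrow> f4" where
  "plus_f4 Z4 y = y"
| "plus_f4 x Z4 = x"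
| "plus_f4 O4 O4 = Z4" | "plus_f4 O4 W4 = V4" | "plus_f4 O4 V4 = W4"
| "plus_f4 W4 O4 = V4" | "plus_f4 W4 W4 = Z4" | "plus_f4 W4 V4 = O4"
| "plus_f4 V4 O4 = W4" | "plus_f4 V4 W4 = O4" | "plus_f4 V4 V4 = Z4"
fun times_f4 :: "f4 \<Rightarrow> f4 \<Rightarrow> f4" where
  "times_f4 Z4 y = Z4"
| "times_f4 x Z4 = Z4"
| "times_f4 O4 y = y"
| "times_f4 x O4 = x"
| "times_f4 W4 W4 = V4" | "times_f4 W4 V4 = O4"
| "times_f4 V4 W4 = O4" | "times_f4 V4 V4 = W4"
definition uminus_f4 :: "f4 \<Rightarrow> f4" where "uminus_f4 x = x"
definition minus_f4 :: "f4 \<Rightarrow> f4 \<Rightarrow> f4" where "minus_f4 x y = x + y"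
fun inverse_f4 :: "f4 \<Rightarrow> f4" where
  "inverse_f4 Z4 = Z4" | "inverse_f4 O4 = O4" | "inverse_f4 W4 = V4" | "inverse_f4 V4 = W4"
definition divide_f4 :: "f4 \<Rightarrow> f4 \<Rightarrow> f4" where "divide_f4 x y = x * inverse y"
instance
proof
  fix a b c :: f4
  show "a * b * c = a * (b * c)" by (cases a; cases b; cases c; simp)
  show "a * b = b * a" by (cases a; cases b; simp)
  show "1 * a = a" by (cases a; simp add: one_f4_def)
  show "a + b + c = a + (b + c)" by (cases a; cases b; cases c; simp)
  show "a + b = b + a" by (cases a; cases b; simp)
  show "0 + a = a" by (cases a; simp add: zero_f4_def)
  show "- a + a = 0" by (cases a; simp add: zero_f4_def uminus_f4_def)
  show "a - b = a + - b" by (simp add: minus_f4_def uminus_f4_def)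
  show "(a + b) * c = a * c + b * c" by (cases a; cases b; cases c; simp)
  show "(0::f4) \<noteq> 1" by (simp add: zero_f4_def one_f4_def)
  show "a \<noteq> 0 \<Longrightarrow> inverse a * a = 1" by (cases a; simp add: zero_f4_def one_f4_def)
  show "divide a b = a * inverse b" by (simp add: divide_f4_def)
  show "inverse (0::f4) = 0" by (simp add: zero_f4_def)
qed
end

lemma f4_zero[simp]: "(0::f4) = Z4" by (simp add: zero_f4_def)
lemma f4_one[simp]: "(1::f4) = O4" by (simp add: one_f4_def)
lemma f4_add_self[simp]: "(x::f4) + x = 0" "(x::f4) + (x + y) = y"
  by (cases x; cases y; simp)+
lemma f4_Z4_O4_simps[simp]:
  "x * Z4 = Z4" "x * O4 = x" "x + Z4 = x" "Z4 * x = Z4" "O4 * x = x" "Z4 + x = x"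
  by (cases x; simp)+
lemma f4_all_iff: "(\<forall>x::f4. P x) \<longleftrightarrow> P Z4 \<and> P O4 \<and> P W4 \<and> P V4"
  by (metis f4.exhaust)
lemma f4_add_eq_0_iff: "(a::f4) + c = Z4 \<longleftrightarrow> a = c" by (cases a; cases c; simp)

lemma UNIV_f4: "(UNIV::f4 set) = {Z4, O4, W4, V4}" using f4.exhaust by auto
instance f4 :: finite by standard (simp add: UNIV_f4)
lemma card_f4: "CARD(f4) = 4" by (simp add: UNIV_f4)

definition frob :: "f4 \<Rightarrow> f4" where "frob x = x * x"

lemma frob_simps[simp]: "frob Z4 = Z4" "frob O4 = O4" "frob W4 = V4" "frob V4 = W4"
  by (simp_all add: frob_def)
lemma frob_add: "frob (a + b) = frob a + frob b" by (cases a; cases b; simp)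
lemma frob_mult: "frob (a * b) = frob a * frob b" by (cases a; cases b; simp)
lemma frob_frob: "frob (frob a) = a" by (cases a; simp)

text \<open>M2 a b c d is the matrix with rows (a, b) and (c, d).\<close>

datatype m2 = M2 f4 f4 f4 f4

fun mmul :: "m2 \<Rightarrow> m2 \<Rightarrow> m2" where
  "mmul (M2 a b c d) (M2 e f g h) = M2 (a*e+b*g) (a*f+b*h) (c*e+d*g) (c*f+d*h)"
fun madd :: "m2 \<Rightarrow> m2 \<Rightarrow> m2" where
  "madd (M2 a b c d) (M2 e f g h) = M2 (a+e) (b+f) (c+g) (d+h)"
fun mfrob :: "m2 \<Rightarrow> m2" where
  "mfrob (M2 a b c d) = M2 (frob a) (frob b) (frob c) (frob d)"
fun mdet :: "m2 \<Rightarrow> f4" where "mdet (M2 a b c d) = a*d + b*c"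
fun madj :: "m2 \<Rightarrow> m2" where "madj (M2 a b c d) = M2 d b c a"
definition mI :: m2 where "mI = M2 1 0 0 1"
definition mZ :: m2 where "mZ = M2 0 0 0 0"
definition msc :: "f4 \<Rightarrow> m2" where "msc l = M2 l 0 0 l"

lemma mdet_mmul: "mdet (mmul A C) = mdet A * mdet C"
  by (cases A; cases C; simp add: algebra_simps)

lemma UNIV_m2: "(UNIV :: m2 set) = (\<lambda>(a, b, c, d). M2 a b c d) ` UNIV"
proof -
  have "A \<in> (\<lambda>(a, b, c, d). M2 a b c d) ` UNIV" for A
    by (cases A) (auto intro: image_eqI[of _ _ "(a, b, c, d)" for a b c d])
  then show ?thesis by blast
qed

instance m2 :: finite
  by standard (simp add: UNIV_m2)

lemma card_m2: "CARD(m2) = 256"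
proof -
  have "inj (\<lambda>(a::f4, b::f4, c::f4, d::f4). M2 a b c d)" by (auto simp: inj_def)
  then have "CARD(m2) = CARD(f4 \<times> f4 \<times> f4 \<times> f4)" by (simp add: UNIV_m2 card_image)
  then show ?thesis by (simp add: card_f4)
qed

definition SL2_list :: "m2 list" where
  "SL2_list = [M2 Z4 O4 O4 Z4, M2 Z4 O4 O4 O4, M2 Z4 O4 O4 W4, M2 Z4 O4 O4 V4,
    M2 Z4 W4 V4 Z4, M2 Z4 W4 V4 O4, M2 Z4 W4 V4 W4, M2 Z4 W4 V4 V4,
    M2 Z4 V4 W4 Z4, M2 Z4 V4 W4 O4, M2 Z4 V4 W4 W4, M2 Z4 V4 W4 V4,
    M2 O4 Z4 Z4 O4, M2 O4 Z4 O4 O4, M2 O4 Z4 W4 O4, M2 O4 Z4 V4 O4,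
    M2 O4 O4 Z4 O4, M2 O4 O4 O4 Z4, M2 O4 O4 W4 V4, M2 O4 O4 V4 W4,
    M2 O4 W4 Z4 O4, M2 O4 W4 O4 V4, M2 O4 W4 W4 W4, M2 O4 W4 V4 Z4,
    M2 O4 V4 Z4 O4, M2 O4 V4 O4 W4, M2 O4 V4 W4 Z4, M2 O4 V4 V4 V4,
    M2 W4 Z4 Z4 V4, M2 W4 Z4 O4 V4, M2 W4 Z4 W4 V4, M2 W4 Z4 V4 V4,
    M2 W4 O4 Z4 V4, M2 W4 O4 O4 Z4, M2 W4 O4 W4 W4, M2 W4 O4 V4 O4,
    M2 W4 W4 Z4 V4, M2 W4 W4 O4 W4, M2 W4 W4 W4 O4, M2 W4 W4 V4 Z4,
    M2 W4 V4 Z4 V4, M2 W4 V4 O4 O4, M2 W4 V4 W4 Z4, M2 W4 V4 V4 W4,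
    M2 V4 Z4 Z4 W4, M2 V4 Z4 O4 W4, M2 V4 Z4 W4 W4, M2 V4 Z4 V4 W4,
    M2 V4 O4 Z4 W4, M2 V4 O4 O4 Z4, M2 V4 O4 W4 O4, M2 V4 O4 V4 V4,
    M2 V4 W4 Z4 W4, M2 V4 W4 O4 O4, M2 V4 W4 W4 V4, M2 V4 W4 V4 Z4,
    M2 V4 V4 Z4 W4, M2 V4 V4 O4 V4, M2 V4 V4 W4 Z4, M2 V4 V4 V4 O4]"

lemma card_SL2_le: "card {A. mdet A = 1} \<le> 60"
proof -
  have "{A. mdet A = 1} \<subseteq> set SL2_list"
  proof
    fix A assume "A \<in> {A. mdet A = 1}"
    then show "A \<in> set SL2_list"
      by (cases A; rename_tac a b c d; case_tac a; case_tac b; case_tac c; case_tac d;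
          simp add: SL2_list_def)
  qed
  then have "card {A. mdet A = 1} \<le> card (set SL2_list)" by (intro card_mono) simp_all
  also have "\<dots> \<le> 60" using card_length[of SL2_list] by (simp add: SL2_list_def)
  finally show ?thesis .
qed

section \<open>Semilinear endomorphisms of F_4^2\<close>

text \<open>(A, B) stands for the F_2-linear map p \<mapsto> A p + B p^\<sigma> of F_4^2 (see eapply).\<close>

type_synonym e2 = "m2 \<times> m2"

fun emul :: "e2 \<Rightarrow> e2 \<Rightarrow> e2" where
  "emul (A, B) (C, D) =
     (madd (mmul A C) (mmul B (mfrob D)), madd (mmul A D) (mmul B (mfrob C)))"
fun eadd :: "e2 \<Rightarrow> e2 \<Rightarrow> e2" where
  "eadd (A, B) (C, D) = (madd A C, madd B D)"
definition econj :: "m2 \<Rightarrow> e2 \<Rightarrow> e2" where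
  "econj g x = emul (emul (g, mZ) x) (madj g, mZ)"

lemmas e2_defs = mI_def mZ_def msc_def econj_def

lemma eadd_ac: "eadd x y = eadd y x" "eadd (eadd x y) z = eadd x (eadd y z)"
  "eadd x (eadd y z) = eadd y (eadd x z)"
  by (cases x; cases y; cases z; rename_tac A B C D E F; case_tac A; case_tac B; case_tac C;
      case_tac D; case_tac E; case_tac F; simp add: algebra_simps)+

lemma econj_eadd: "econj g (eadd x y) = eadd (econj g x) (econj g y)"
  by (cases g; cases x; cases y; rename_tac a b c d A B C D; case_tac A; case_tac B;
      case_tac C; case_tac D; simp add: econj_def mZ_def algebra_simps frob_def)

lemma emul_linear: "emul (A, mZ) (C, mZ) = (mmul A C, mZ)"
  by (cases A; cases C; simp add: mZ_def)

lemma emul_madj: "mdet g = 1 \<Longrightarrow>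
  emul (g, mZ) (madj g, mZ) = (mI, mZ) \<and> emul (madj g, mZ) (g, mZ) = (mI, mZ)"
  by (cases g; rename_tac a b c d; case_tac a; case_tac b; case_tac c; case_tac d;
      simp add: mZ_def mI_def)

lemma emul_omega_commute_iff: "emul (A, B) (msc W4, mZ) = emul (msc W4, mZ) (A, B) \<longleftrightarrow> B = mZ"
proof -
  have "b * V4 = W4 * b \<longleftrightarrow> b = Z4" for b by (cases b; simp)
  then show ?thesis by (cases A; cases B; simp add: msc_def mZ_def mult.commute)
qed

section \<open>SL_2(F_4)-stable subalgebras\<close>

definition sl2_stable :: "e2 set \<Rightarrow> bool" where
  "sl2_stable R \<longleftrightarrow> (mZ, mZ) \<in> R \<and> (mI, mZ) \<in> R
     \<and> (\<forall>x\<in>R. \<forall>y\<in>R. eadd x y \<in> R \<and> emul x y \<in> R)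
     \<and> (\<forall>g x. mdet g = 1 \<longrightarrow> x \<in> R \<longrightarrow> econj g x \<in> R)"

lemma sl2_stableD:
  assumes "sl2_stable R"
  shows "(mZ, mZ) \<in> R" "(mI, mZ) \<in> R" "x \<in> R \<Longrightarrow> y \<in> R \<Longrightarrow> eadd x y \<in> R"
    "x \<in> R \<Longrightarrow> y \<in> R \<Longrightarrow> emul x y \<in> R" "mdet g = 1 \<Longrightarrow> x \<in> R \<Longrightarrow> econj g x \<in> R"
  using assms unfolding sl2_stable_def by blast+

definition linear_part_sum :: "e2 \<Rightarrow> e2" where
  "linear_part_sum x = eadd x (eadd (econj (M2 Z4 V4 W4 O4) x) (eadd (econj (M2 O4 V4 W4 Z4) x)
     (eadd (econj (M2 W4 Z4 O4 V4) x) (eadd (econj (M2 W4 Z4 V4 V4) x) (eadd (econj (M2 W4 V4 Z4 V4) x)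
     (eadd (econj (M2 V4 Z4 O4 W4) x) (eadd (econj (M2 V4 Z4 V4 W4) x) (econj (M2 V4 V4 Z4 W4) x))))))))"

lemma linear_part_sum_eq: "linear_part_sum (A, B) = (A, mZ)"
proof -
  have additive: "linear_part_sum (eadd x y) = eadd (linear_part_sum x) (linear_part_sum y)" for x y
    unfolding linear_part_sum_def econj_eadd by (simp only: eadd_ac)
  have "linear_part_sum (A, mZ) = (A, mZ)"
    by (cases A; rename_tac a b c d; case_tac a; case_tac b; case_tac c; case_tac d;
        simp add: linear_part_sum_def econj_def mZ_def)
  moreover have "linear_part_sum (mZ, B) = (mZ, mZ)"
    by (cases B; rename_tac a b c d; case_tac a; case_tac b; case_tac c; case_tac d;
        simp add: linear_part_sum_def econj_def mZ_def)
  moreover have "(A, B) = eadd (A, mZ) (mZ, B)" "eadd (A, mZ) (mZ, mZ) = (A, mZ)"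
    by (cases A; cases B; simp add: mZ_def)+
  ultimately show ?thesis using additive by metis
qed

lemma sl2_stable_parts:
  assumes R: "sl2_stable R" and AB: "(A, B) \<in> R"
  shows "(A, mZ) \<in> R" "(mZ, B) \<in> R"
proof -
  note R_closed = sl2_stableD[OF R]
  have "mdet (M2 Z4 V4 W4 O4) = 1" "mdet (M2 O4 V4 W4 Z4) = 1" "mdet (M2 W4 Z4 O4 V4) = 1"
    "mdet (M2 W4 Z4 V4 V4) = 1" "mdet (M2 W4 V4 Z4 V4) = 1" "mdet (M2 V4 Z4 O4 W4) = 1"
    "mdet (M2 V4 Z4 V4 W4) = 1" "mdet (M2 V4 V4 Z4 W4) = 1" by simp_all
  then have "linear_part_sum (A, B) \<in> R"
    unfolding linear_part_sum_def by (intro R_closed(3) R_closed(5)[OF _ AB] AB)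
  then show A: "(A, mZ) \<in> R" by (simp add: linear_part_sum_eq)
  have "eadd (A, B) (A, mZ) = (mZ, B)" by (cases A; cases B; simp add: mZ_def)
  then show "(mZ, B) \<in> R" using R_closed(3)[OF AB A] by simp
qed

lemma sl2_stable_scalars:
  assumes R: "sl2_stable R" and "(msc W4, mZ) \<in> R"
  shows "(msc l, mZ) \<in> R"
proof -
  note R_closed = sl2_stableD[OF R]
  have "emul (msc W4, mZ) (msc W4, mZ) = (msc V4, mZ)" by (simp add: msc_def mZ_def)
  then have "(msc V4, mZ) \<in> R" using R_closed(4)[OF assms(2) assms(2)] by simp
  then show ?thesis using R_closed(1,2) assms(2) by (cases l; simp add: msc_def mZ_def mI_def)
qed

definition unipotent :: "f4 \<Rightarrow> m2" where "unipotent t = M2 1 t 0 1"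

lemma square_sum_conj_unipotent: "c \<noteq> Z4 \<Longrightarrow>
  (let y = eadd (M2 a b c d, mZ) (econj (unipotent (W4 * inverse c)) (M2 a b c d, mZ)) in emul y y)
    = (msc V4, mZ)"
  by (cases a; cases b; cases c; cases d; simp add: e2_defs unipotent_def Let_def)

text \<open>The parameter t is chosen so that the factor t (a + d + t c) below is nonzero.\<close>

definition unipotent_param :: "f4 \<Rightarrow> f4 \<Rightarrow> f4 \<Rightarrow> f4" where
  "unipotent_param a c d = (if a + d = W4 then V4 * inverse c else W4 * inverse c)"

lemma elementary_from_conj_unipotent: "c \<noteq> Z4 \<Longrightarrow> t = unipotent_param a c d \<Longrightarrow>
  emul (msc (inverse (t * (a + d + t * c))), mZ)
     (eadd (eadd (M2 a b c d, mZ) (econj (unipotent t) (M2 a b c d, mZ))) (msc (t * c), mZ))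
   = (M2 0 1 0 0, mZ)"
  by (cases a; cases b; cases c; cases d; simp add: e2_defs unipotent_def unipotent_param_def)

lemma sl2_stable_lower_left:
  assumes R: "sl2_stable R" and A: "(M2 a b c d, mZ) \<in> R" and c: "c \<noteq> Z4"
  shows "(A', mZ) \<in> R"
proof -
  note R_closed = sl2_stableD[OF R]
  have det_unipotent: "mdet (unipotent t) = 1" for t by (simp add: unipotent_def)
  have "(msc V4, mZ) \<in> R"
    using square_sum_conj_unipotent[OF c, of a b d] R_closed(4)
      R_closed(3)[OF A R_closed(5)[OF det_unipotent A]]
    by (metis (no_types, lifting))
  moreover have "emul (msc V4, mZ) (msc V4, mZ) = (msc W4, mZ)" by (simp add: msc_def mZ_def)
  ultimately have "(msc W4, mZ) \<in> R" using R_closed(4) by metis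
  note scalars = sl2_stable_scalars[OF R this]
  have e12: "(M2 0 1 0 0, mZ) \<in> R"
    unfolding elementary_from_conj_unipotent[OF c refl, of a d b, symmetric]
    by (intro R_closed(3,4,5) scalars A det_unipotent)
  have "econj (M2 0 1 1 0) (M2 0 1 0 0, mZ) = (M2 0 0 1 0, mZ)" by (simp add: e2_defs)
  then have e21: "(M2 0 0 1 0, mZ) \<in> R" using R_closed(5)[OF _ e12, of "M2 0 1 1 0"] by simp
  have e11: "(M2 1 0 0 0, mZ) \<in> R" using R_closed(4)[OF e12 e21] by (simp add: mZ_def)
  have e22: "(M2 0 0 0 1, mZ) \<in> R" using R_closed(4)[OF e21 e12] by (simp add: mZ_def)
  obtain p q r s where A': "A' = M2 p q r s" by (cases A')
  have "(A', mZ) = eadd (eadd (emul (msc p, mZ) (M2 1 0 0 0, mZ)) (emul (msc q, mZ) (M2 0 1 0 0, mZ)))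
      (eadd (emul (msc r, mZ) (M2 0 0 1 0, mZ)) (emul (msc s, mZ) (M2 0 0 0 1, mZ)))"
    by (simp add: A' msc_def mZ_def)
  also have "\<dots> \<in> R" by (intro R_closed(3,4) scalars e11 e12 e21 e22)
  finally show ?thesis .
qed

lemma sl2_stable_nonscalar:
  assumes R: "sl2_stable R" and A: "(A, mZ) \<in> R" and nonscalar: "\<forall>l. A \<noteq> msc l"
  shows "(A', mZ) \<in> R"
proof -
  note R_closed = sl2_stableD[OF R]
  obtain a b c d where A_eq: "A = M2 a b c d" by (cases A)
  have det_swap: "mdet (M2 0 1 1 0) = 1" and det_unipotent: "mdet (unipotent 1) = 1"
    by (simp_all add: unipotent_def)
  consider "c \<noteq> Z4" | "b \<noteq> Z4" | "b = Z4" "c = Z4" by blast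
  then show ?thesis
  proof cases
    case 1
    then show ?thesis using sl2_stable_lower_left[OF R] A A_eq by blast
  next
    case 2
    have "econj (M2 0 1 1 0) (A, mZ) = (M2 d c b a, mZ)" by (simp add: A_eq e2_defs)
    then have "(M2 d c b a, mZ) \<in> R" using R_closed(5)[OF det_swap A] by simp
    then show ?thesis using sl2_stable_lower_left[OF R] 2 by blast
  next
    case 3
    have "a + d \<noteq> Z4" using nonscalar A_eq 3 by (cases a; cases d; auto simp: msc_def)
    moreover have "econj (M2 0 1 1 0) (econj (unipotent 1) (A, mZ)) = (M2 d 0 (a + d) a, mZ)"
      using 3 by (cases a; cases d; simp add: A_eq unipotent_def e2_defs)
    then have "(M2 d 0 (a + d) a, mZ) \<in> R"
      using R_closed(5)[OF det_swap R_closed(5)[OF det_unipotent A]] by simp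
    ultimately show ?thesis using sl2_stable_lower_left[OF R] by blast
  qed
qed

definition swap_omega :: m2 where "swap_omega = M2 0 1 1 W4"

lemma semilinear_products_nonscalar: "B \<noteq> mZ \<Longrightarrow>
   snd (emul (mZ, B) (mZ, B)) = mZ \<and> snd (emul (mZ, B) (econj swap_omega (mZ, B))) = mZ \<and>
  ((\<forall>l. fst (emul (mZ, B) (mZ, B)) \<noteq> msc l) \<or> (\<forall>l. fst (emul (mZ, B) (econj swap_omega (mZ, B))) \<noteq> msc l))"
  unfolding f4_all_iff
  by (cases B; rename_tac a b c d; case_tac a; case_tac b; case_tac c; case_tac d;
      simp add: e2_defs swap_omega_def)

lemma sl2_stable_semilinear:
  assumes R: "sl2_stable R" and B: "(mZ, B) \<in> R" "B \<noteq> mZ"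
  shows "(A', mZ) \<in> R"
proof -
  note R_closed = sl2_stableD[OF R]
  have "mdet swap_omega = 1" by (simp add: swap_omega_def)
  then have "emul (mZ, B) (mZ, B) \<in> R" "emul (mZ, B) (econj swap_omega (mZ, B)) \<in> R"
    using R_closed(4,5) B(1) by blast+
  moreover have "(A', mZ) \<in> R" if "x \<in> R" "snd x = mZ" "\<forall>l. fst x \<noteq> msc l" for x
    using sl2_stable_nonscalar[OF R] that by (metis prod.collapse)
  ultimately show ?thesis using semilinear_products_nonscalar[OF B(2)] by blast
qed

lemma frobenius_in_bimodule: "B \<noteq> mZ \<Longrightarrow> \<exists>P1 Q1 P2 Q2.
  eadd (emul (P1, mZ) (emul (mZ, B) (Q1, mZ))) (emul (P2, mZ) (emul (mZ, B) (Q2, mZ))) = (mZ, mI)"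
proof -
  assume "B \<noteq> mZ"
  moreover obtain a b c d where B: "B = M2 a b c d" by (cases B)
  ultimately consider "a \<noteq> 0" | "b \<noteq> 0" | "c \<noteq> 0" | "d \<noteq> 0" by (auto simp: mZ_def)
  then show ?thesis
  proof cases
    case 1 then show ?thesis
      by (intro exI[of _ "M2 (inverse a) 0 0 0"] exI[of _ "M2 1 0 0 0"]
          exI[of _ "M2 0 0 (inverse a) 0"] exI[of _ "M2 0 1 0 0"]) (cases a; simp add: B e2_defs)
  next
    case 2 then show ?thesis
      by (intro exI[of _ "M2 (inverse b) 0 0 0"] exI[of _ "M2 0 0 1 0"]
          exI[of _ "M2 0 0 (inverse b) 0"] exI[of _ "M2 0 0 0 1"]) (cases b; simp add: B e2_defs)
  next
    case 3 then show ?thesis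
      by (intro exI[of _ "M2 0 (inverse c) 0 0"] exI[of _ "M2 1 0 0 0"]
          exI[of _ "M2 0 0 0 (inverse c)"] exI[of _ "M2 0 1 0 0"]) (cases c; simp add: B e2_defs)
  next
    case 4 then show ?thesis
      by (intro exI[of _ "M2 0 (inverse d) 0 0"] exI[of _ "M2 0 0 1 0"]
          exI[of _ "M2 0 0 0 (inverse d)"] exI[of _ "M2 0 0 0 1"]) (cases d; simp add: B e2_defs)
  qed
qed

lemma sl2_stable_UNIV:
  assumes R: "sl2_stable R" and linear: "\<forall>A. (A, mZ) \<in> R" and B: "(mZ, B) \<in> R" "B \<noteq> mZ"
  shows "R = UNIV"
proof -
  note R_closed = sl2_stableD[OF R]
  obtain P1 Q1 P2 Q2 where
    "eadd (emul (P1, mZ) (emul (mZ, B) (Q1, mZ))) (emul (P2, mZ) (emul (mZ, B) (Q2, mZ))) = (mZ, mI)"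
    using frobenius_in_bimodule[OF B(2)] by blast
  then have frob: "(mZ, mI) \<in> R" by (metis R_closed(3,4) linear B(1))
  have "(A, C) \<in> R" for A C
  proof -
    have "(A, C) = eadd (A, mZ) (emul (C, mZ) (mZ, mI))"
      by (cases A; cases C; simp add: e2_defs)
    also have "\<dots> \<in> R" by (intro R_closed(3,4) linear[rule_format] frob)
    finally show ?thesis .
  qed
  then show ?thesis by auto
qed

theorem sl2_stable_cases:
  assumes R: "sl2_stable R"
  shows "R = {(mZ, mZ), (mI, mZ)} \<or> R = {(msc l, mZ) | l. True} \<or> R = {(A, mZ) | A. True}
    \<or> R = UNIV"
proof (cases "\<forall>A. (A, mZ) \<in> R")
  case linear: True
  show ?thesis
  proof (cases "\<exists>A B. (A, B) \<in> R \<and> B \<noteq> mZ")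
    case True
    then show ?thesis using sl2_stable_UNIV[OF R linear] sl2_stable_parts[OF R] by blast
  next
    case False
    then have "R = {(A, mZ) | A. True}" using linear by auto
    then show ?thesis by blast
  qed
next
  case False
  have scalar: "\<exists>l. x = (msc l, mZ)" if "x \<in> R" for x
  proof -
    obtain A B where x: "x = (A, B)" by fastforce
    have "B = mZ" using sl2_stable_semilinear[OF R] sl2_stable_parts(2)[OF R] that x False by blast
    moreover have "\<exists>l. A = msc l"
      using sl2_stable_nonscalar[OF R] sl2_stable_parts(1)[OF R] that x False by blast
    ultimately show ?thesis using x by blast
  qed
  show ?thesis
  proof (cases "(msc W4, mZ) \<in> R")
    case True
    then show ?thesis using sl2_stable_scalars[OF R True] scalar by blast
  next
    case False
    have "emul (msc V4, mZ) (msc V4, mZ) = (msc W4, mZ)" by (simp add: msc_def mZ_def)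
    then have "(msc V4, mZ) \<notin> R" using False sl2_stableD(4)[OF R] by metis
    then have "x = (mZ, mZ) \<or> x = (mI, mZ)" if x: "x \<in> R" for x
    proof -
      obtain l where "x = (msc l, mZ)" using scalar[OF x] by blast
      then show ?thesis
        using x False \<open>(msc V4, mZ) \<notin> R\<close> by (cases l) (auto simp: msc_def mZ_def mI_def)
    qed
    then show ?thesis using sl2_stableD(1,2)[OF R] by blast
  qed
qed

fun vadd :: "f4 \<times> f4 \<Rightarrow> f4 \<times> f4 \<Rightarrow> f4 \<times> f4" where
  "vadd (a, b) (c, d) = (a + c, b + d)"
fun smul :: "f4 \<Rightarrow> f4 \<times> f4 \<Rightarrow> f4 \<times> f4" where
  "smul l (a, b) = (l * a, l * b)"
fun mvec :: "m2 \<Rightarrow> f4 \<times> f4 \<Rightarrow> f4 \<times> f4" where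
  "mvec (M2 a b c d) (x, y) = (a * x + b * y, c * x + d * y)"
fun vfrob :: "f4 \<times> f4 \<Rightarrow> f4 \<times> f4" where
  "vfrob (x, y) = (frob x, frob y)"
fun eapply :: "e2 \<Rightarrow> f4 \<times> f4 \<Rightarrow> f4 \<times> f4" where
  "eapply (A, B) p = vadd (mvec A p) (mvec B (vfrob p))"

lemma vadd_eq_0: "vadd p q = (0, 0) \<Longrightarrow> p = q"
  by (cases p; cases q; simp add: f4_add_eq_0_iff)

lemma eapply_emul: "eapply (emul x y) p = eapply x (eapply y p)"
  by (cases x; cases y; cases p; rename_tac A B C D p1 p2; case_tac A; case_tac B; case_tac C;
      case_tac D; simp add: frob_add frob_mult frob_frob algebra_simps)

lemma eapply_eadd: "eapply (eadd x y) p = vadd (eapply x p) (eapply y p)"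
  by (cases x; cases y; cases p; rename_tac A B C D p1 p2; case_tac A; case_tac B; case_tac C;
      case_tac D; simp add: algebra_simps)

lemma eapply_vadd: "eapply x (vadd p q) = vadd (eapply x p) (eapply x q)"
  by (cases x; cases p; cases q; rename_tac A B p1 p2 q1 q2; case_tac A; case_tac B;
      simp add: frob_add algebra_simps)

lemma eapply_one: "eapply (mI, mZ) p = p" by (cases p; simp add: mI_def mZ_def)
lemma eapply_zero: "eapply (mZ, mZ) p = (0, 0)" by (cases p; simp add: mZ_def)
lemma eapply_scalar: "eapply (msc l, mZ) p = smul l p" by (cases p; simp add: msc_def mZ_def)

text \<open>(1, 0), (\<omega>, 0), (0, 1), (0, \<omega>) form an F_2-basis of F_4^2.\<close>

lemma eapply_inject:
  assumes "\<forall>p. eapply x p = eapply y p"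
  shows "x = y"
proof -
  have unique: "a + b = c + d \<Longrightarrow> a * W4 + b * V4 = c * W4 + d * V4 \<Longrightarrow> a = c \<and> b = d"
    for a b c d by (cases a; cases b; cases c; cases d; simp)
  obtain a1 a2 a3 a4 b1 b2 b3 b4 where x: "x = (M2 a1 a2 a3 a4, M2 b1 b2 b3 b4)"
    by (metis m2.exhaust prod.collapse)
  obtain c1 c2 c3 c4 d1 d2 d3 d4 where y: "y = (M2 c1 c2 c3 c4, M2 d1 d2 d3 d4)"
    by (metis m2.exhaust prod.collapse)
  have "eapply x (1, 0) = eapply y (1, 0)" "eapply x (W4, 0) = eapply y (W4, 0)"
    "eapply x (0, 1) = eapply y (0, 1)" "eapply x (0, W4) = eapply y (0, W4)"
    using assms by blast+
  then have "a1 = c1 \<and> b1 = d1" "a3 = c3 \<and> b3 = d3" "a2 = c2 \<and> b2 = d2" "a4 = c4 \<and> b4 = d4"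
    by (auto simp: x y intro!: unique)
  then show ?thesis by (simp add: x y)
qed

lemma UNIV_bit: "(UNIV :: bit set) = {0, 1}" by (auto intro: bit.exhaust)

instance bit :: finite
  by standard (simp add: UNIV_bit)

lemma card_bit: "CARD(bit) = 2"
  by (simp add: UNIV_bit)

lemma vec_add_self[simp]: "(x::bit^'n) + x = 0" by (simp add: vec_eq_iff)
lemma vec_add_self2[simp]: "(x::bit^'n) + (x + y) = y"
  by (metis add.assoc vec_add_self add_0)
lemma vec_add_eq_0: "(x::bit^'n) + y = 0 \<Longrightarrow> x = y"
  by (metis vec_add_self2 add_0_right)
lemma mat_add_self[simp]: "(M::bit^'n^'m) + M = 0" by (simp add: vec_eq_iff)
lemma mat_add_self2[simp]: "(M::bit^'n^'m) + (M + N) = N"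
  by (metis add.assoc mat_add_self add_0)
lemma mat_add_eq_0: "(x::bit^'n^'m) + y = 0 \<Longrightarrow> x = y"
  by (metis mat_add_self2 add_0_right)

lemma mat_one_neq_zero: "mat 1 \<noteq> (0::bit^'n^'n)"
proof
  fix i :: 'n
  assume "mat 1 = (0::bit^'n^'n)"
  then have "(mat 1 :: bit^'n^'n) $ i $ i = 0" by simp
  then show False by (simp add: mat_def)
qed

lemma add_mat_one_neq:
  fixes w :: "bit^'n^'n"
  assumes "w \<noteq> 0" "w \<noteq> mat 1"
  shows "w + mat 1 \<noteq> 0" "w + mat 1 \<noteq> mat 1" "w + mat 1 \<noteq> w"
proof -
  show "w + mat 1 \<noteq> 0" using assms(2) mat_add_eq_0 by blast
  show "w + mat 1 \<noteq> mat 1"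
  proof
    assume "w + mat 1 = mat 1"
    then have "w + mat 1 + mat 1 = mat 1 + mat 1" by simp
    then show False using assms(1) by (simp add: add.assoc)
  qed
  show "w + mat 1 \<noteq> w"
  proof
    assume "w + mat 1 = w"
    then have "w + (w + mat 1) = w + w" by simp
    then show False by (simp add: mat_one_neq_zero)
  qed
qed

lemma matrix_add_rdistrib: "((A::'a::semiring_1^'n^'m) + B) ** C = A ** C + B ** C"
  by (vector matrix_matrix_mult_def sum.distrib[symmetric] field_simps)

lemma matrix_inv_unique:
  fixes A B :: "'a::semiring_1^'n^'n"
  assumes AB: "A ** B = mat 1" and BA: "B ** A = mat 1"
  shows "matrix_inv A = B"
proof -
  have inv: "A ** matrix_inv A = mat 1 \<and> matrix_inv A ** A = mat 1"
    unfolding matrix_inv_def by (rule someI[of _ B]) (use AB BA in simp)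
  have "matrix_inv A = matrix_inv A ** (A ** B)" using AB by simp
  also have "\<dots> = B" using inv by (simp add: matrix_mul_assoc)
  finally show ?thesis .
qed

lemma subset_centralizer_centralizer: "S \<subseteq> centralizer (centralizer S)"
  by (auto simp: centralizer_def)

section \<open>End_G(X_2) and the group G\<close>

lemma field_of_four_matrices:
  assumes F: "field (mat_ring C)" and card: "card C = 4"
  shows "\<exists>w. C = {0, mat 1, w, w + mat 1} \<and> w ** w = w + mat 1"
proof -
  interpret F: field "mat_ring C" by (rule F)
  have closed: "0 \<in> C" "mat 1 \<in> C" "\<And>a b. a \<in> C \<Longrightarrow> b \<in> C \<Longrightarrow> a + b \<in> C"
    "\<And>a b. a \<in> C \<Longrightarrow> b \<in> C \<Longrightarrow> a ** b \<in> C"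
    using F.zero_closed F.one_closed F.a_closed F.m_closed by (auto simp: mat_ring_def)
  have integral: "a \<in> C \<Longrightarrow> b \<in> C \<Longrightarrow> a ** b = 0 \<Longrightarrow> a = 0 \<or> b = 0" for a b
    using F.integral[of a b] by (simp add: mat_ring_def)
  have "\<not> C \<subseteq> {0, mat 1}"
  proof
    assume "C \<subseteq> {0, mat 1}"
    then have "card C \<le> card {0, mat 1 :: end2}" by (intro card_mono) simp_all
    also have "\<dots> \<le> 2" by (simp add: card_insert_if)
    finally show False using card by simp
  qed
  then obtain w where w: "w \<in> C" "w \<noteq> 0" "w \<noteq> mat 1" by blast
  have w1: "w + mat 1 \<in> C" using closed w by blast
  note w1_ne = add_mat_one_neq[OF w(2,3)]
  have "card {0, mat 1, w, w + mat 1} = 4"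
    using w w1_ne w(2,3)[symmetric] w1_ne[symmetric]
    by (simp add: card_insert_if mat_one_neq_zero mat_one_neq_zero[symmetric])
  moreover have "finite C" using card by (intro card_ge_0_finite) simp
  moreover have "{0, mat 1, w, w + mat 1} \<subseteq> C" using closed w w1 by simp
  ultimately have C: "C = {0, mat 1, w, w + mat 1}" using card card_subset_eq by metis
  have sq: "w ** (w + mat 1) = w ** w + w" "(w + mat 1) ** (w + mat 1) = w ** w + mat 1"
    by (simp_all add: matrix_add_ldistrib matrix_add_rdistrib add_ac)
  have "w ** w \<noteq> 0" using integral w by blast
  moreover have "w ** w \<noteq> w"
  proof
    assume "w ** w = w"
    then have "w ** (w + mat 1) = 0" using sq(1) by simp
    then show False using integral w w1 w1_ne by blast
  qed
  moreover have "w ** w \<noteq> mat 1"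
  proof
    assume "w ** w = mat 1"
    then have "(w + mat 1) ** (w + mat 1) = 0" using sq(2) by simp
    then show False using integral w1 w1_ne by blast
  qed
  moreover have "w ** w \<in> C" using closed w by blast
  ultimately show ?thesis using C by (intro exI[of _ w]) auto
qed

lemma (in group) perfect_imp_mult_trivial:
  fixes f :: "'a \<Rightarrow> 'c::comm_monoid_mult"
  assumes perfect: "derived G (carrier G) = carrier G"
    and f_mult: "\<And>x y. x \<in> carrier G \<Longrightarrow> y \<in> carrier G \<Longrightarrow> f (x \<otimes> y) = f x * f y"
    and f_one: "f \<one> = 1"
    and x: "x \<in> carrier G"
  shows "f x = 1"
proof -
  have f_inv: "f (inv a) * f a = 1" if a: "a \<in> carrier G" for a
  proof -
    have "f (inv a) * f a = f (inv a \<otimes> a)" using f_mult[of "inv a" a] a by simp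
    then show ?thesis using a f_one by simp
  qed
  have "subgroup {x \<in> carrier G. f x = 1} G"
  proof (rule subgroupI)
    show "a \<in> {x \<in> carrier G. f x = 1} \<Longrightarrow> inv a \<in> {x \<in> carrier G. f x = 1}" for a
      using f_inv[of a] by simp
  qed (auto simp: f_one f_mult)
  moreover have "derived_set G (carrier G) \<subseteq> {x \<in> carrier G. f x = 1}"
  proof
    fix z assume "z \<in> derived_set G (carrier G)"
    then obtain a b where ab: "a \<in> carrier G" "b \<in> carrier G"
      and z: "z = a \<otimes> b \<otimes> inv a \<otimes> inv b" by auto
    then have "f z = (f (inv a) * f a) * (f (inv b) * f b)"
      by (simp add: f_mult ac_simps)
    then show "z \<in> {x \<in> carrier G. f x = 1}" using ab z f_inv by simp
  qed
  ultimately have "derived G (carrier G) \<subseteq> {x \<in> carrier G. f x = 1}"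
    unfolding derived_def by (rule generate_subgroup_incl[rotated])
  then show ?thesis using perfect x by auto
qed

lemma perfect_if_iso_alt_group_5:
  assumes "group H" "H \<cong> alt_group 5"
  shows "derived H (carrier H) = carrier H"
proof -
  obtain h where h: "h \<in> iso (alt_group 5) H"
    using group.iso_sym[OF assms] unfolding is_iso_def by blast
  then have "group_hom (alt_group 5) H h"
    by (simp add: group_hom_def group_hom_axioms_def alt_group_is_group assms(1) iso_imp_homomorphism)
  then have "derived H (h ` carrier (alt_group 5)) = h ` derived (alt_group 5) (carrier (alt_group 5))"
    using group_hom.derived_img subset_refl by blast
  then show ?thesis using h derived_alt_group_const[of 5] by (simp add: iso_iff)
qed

lemma card_iso_alt_group_5:
  assumes "H \<cong> alt_group 5"
  shows "card (carrier H) = 60"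
proof -
  have "card (carrier H) = card (carrier (alt_group 5))" using assms by (rule iso_same_card)
  moreover have "2 * card (carrier (alt_group 5)) = fact 5" by (rule alt_group_card_carrier) simp
  moreover have "(fact 5 :: nat) = 120" by (simp add: fact_numeral)
  ultimately show ?thesis by simp
qed

section \<open>Coordinates for X_2 as a plane over F_4\<close>

fun f4_scalar :: "end2 \<Rightarrow> f4 \<Rightarrow> end2" where
  "f4_scalar w Z4 = 0" | "f4_scalar w O4 = mat 1" | "f4_scalar w W4 = w" | "f4_scalar w V4 = w + mat 1"

locale f4_frame =
  fixes w :: end2 and v1 v2 :: vec2
  assumes w_square: "w ** w = w + mat 1"
    and v1_nonzero: "v1 \<noteq> 0"
    and v2_independent: "\<forall>a. v2 \<noteq> f4_scalar w a *v v1"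
begin

definition coord :: "f4 \<times> f4 \<Rightarrow> vec2" where
  "coord p = f4_scalar w (fst p) *v v1 + f4_scalar w (snd p) *v v2"

definition to_end2 :: "e2 \<Rightarrow> end2" where
  "to_end2 x = matrix (\<lambda>v. coord (eapply x (inv_into UNIV coord v)))"

lemma f4_scalar_add: "f4_scalar w (a + b) *v x = f4_scalar w a *v x + f4_scalar w b *v x"
  by (cases a; cases b; simp add: matrix_vector_mult_add_rdistrib add_ac)

lemma f4_scalar_mult: "f4_scalar w (a * b) *v x = f4_scalar w a *v (f4_scalar w b *v x)"
proof -
  have "w *v (w *v x) = w *v x + x"
    using w_square by (simp add: matrix_vector_mul_assoc matrix_vector_mult_add_rdistrib)
  then show ?thesis
    by (cases a; cases b; simp add: matrix_vector_mult_add_rdistrib matrix_vector_right_distrib add_ac)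
qed

lemma f4_scalar_eq_0: "a \<noteq> 0 \<Longrightarrow> f4_scalar w a *v x = 0 \<Longrightarrow> x = 0"
  by (metis matrix_vector_mult_0_right f4_scalar_mult field_class.field_inverse f4_scalar.simps(2)
      matrix_vector_mul_lid f4_one)

lemma coord_vadd: "coord (vadd p q) = coord p + coord q"
  by (cases p; cases q; simp add: coord_def f4_scalar_add add_ac)

lemma coord_smul: "coord (smul l p) = f4_scalar w l *v coord p"
  by (cases p; simp add: coord_def f4_scalar_mult matrix_vector_right_distrib)

lemma coord_eq_0:
  assumes "coord (a, b) = 0"
  shows "a = 0 \<and> b = 0"
proof -
  have "b = 0"
  proof (rule ccontr)
    assume "b \<noteq> 0"
    then have "coord (smul (inverse b) (a, b)) = f4_scalar w (inverse b * a) *v v1 + v2"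
      by (simp add: coord_def field_class.field_inverse)
    moreover have "coord (smul (inverse b) (a, b)) = 0"
      by (simp only: coord_smul assms matrix_vector_mult_0_right)
    ultimately show False using v2_independent vec_add_eq_0 by metis
  qed
  moreover have "f4_scalar w a *v v1 = 0" using assms \<open>b = 0\<close> by (simp add: coord_def)
  ultimately show ?thesis using f4_scalar_eq_0 v1_nonzero by blast
qed

lemma bij_coord: "bij coord"
proof -
  have "inj coord"
  proof (rule injI)
    fix p q assume "coord p = coord q"
    then have "coord (vadd p q) = 0" by (simp add: coord_vadd)
    then show "p = q" using coord_eq_0 vadd_eq_0 by (metis surj_pair)
  qed
  moreover have "CARD(f4 \<times> f4) = CARD(vec2)" by (simp add: card_f4 card_bit)
  ultimately show ?thesis by (simp add: bij_def card_image card_subset_eq)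
qed

lemma coord_inv_coord[simp]: "coord (inv_into UNIV coord v) = v"
  by (meson bij_coord bij_is_surj surj_f_inv_f)

lemma inv_coord_coord[simp]: "inv_into UNIV coord (coord p) = p"
  by (meson bij_coord bij_is_inj inv_f_f)

lemma to_end2_apply: "to_end2 x *v v = coord (eapply x (inv_into UNIV coord v))"
proof -
  have add: "coord (eapply x (inv_into UNIV coord (u + v))) = coord (eapply x (inv_into UNIV coord u)) + coord (eapply x (inv_into UNIV coord v))"
    for u v by (metis coord_inv_coord inv_coord_coord coord_vadd eapply_vadd)
  have "coord (eapply x (inv_into UNIV coord 0)) = 0" using add[of 0 0] by simp
  then have "coord (eapply x (inv_into UNIV coord (c *s v))) = c *s coord (eapply x (inv_into UNIV coord v))" for c v
    by (cases c) simp_all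
  then have "Vector_Spaces.linear (*s) (*s) (\<lambda>v. coord (eapply x (inv_into UNIV coord v)))"
    by (subst Vector_Spaces.linear_iff) (use add vec.vector_space_axioms in blast)
  then show ?thesis unfolding to_end2_def by (rule matrix_works)
qed

lemma to_end2_emul: "to_end2 (emul x y) = to_end2 x ** to_end2 y"
  by (simp add: matrix_eq to_end2_apply eapply_emul flip: matrix_vector_mul_assoc)

lemma to_end2_eadd: "to_end2 (eadd x y) = to_end2 x + to_end2 y"
  by (simp add: matrix_eq to_end2_apply eapply_eadd coord_vadd matrix_vector_mult_add_rdistrib)

lemma to_end2_one: "to_end2 (mI, mZ) = mat 1"
  by (simp add: matrix_eq to_end2_apply eapply_one del: eapply.simps)

lemma to_end2_zero: "to_end2 (mZ, mZ) = 0"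
  by (simp add: matrix_eq to_end2_apply eapply_zero coord_def del: eapply.simps)

lemma to_end2_scalar: "to_end2 (msc l, mZ) = f4_scalar w l"
  by (simp add: matrix_eq to_end2_apply eapply_scalar coord_smul del: eapply.simps smul.simps)

lemma bij_to_end2: "bij to_end2"
proof -
  have "inj to_end2"
  proof (rule injI)
    fix x y assume "to_end2 x = to_end2 y"
    then have "\<forall>v. coord (eapply x (inv_into UNIV coord v)) = coord (eapply y (inv_into UNIV coord v))"
      by (metis to_end2_apply)
    then have "\<forall>p. eapply x p = eapply y p" by (metis inv_coord_coord)
    then show "x = y" by (rule eapply_inject)
  qed
  moreover have "CARD(e2) = CARD(end2)" by (simp add: card_m2 card_bit)
  ultimately show ?thesis by (simp add: bij_def card_image card_subset_eq)
qed

lemma inj_to_end2: "inj to_end2"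
  using bij_to_end2 by (rule bij_is_inj)

lemma surj_to_end2: "surj to_end2"
  using bij_to_end2 by (rule bij_is_surj)

lemma to_end2_scalars: "to_end2 ` {(msc l, mZ) | l. True} = {0, mat 1, w, w + mat 1}"
proof -
  have "to_end2 ` {(msc l, mZ) | l. True} = range (f4_scalar w)"
    by (simp add: full_SetCompr_eq image_image to_end2_scalar)
  also have "\<dots> = {0, mat 1, w, w + mat 1}" by (simp add: UNIV_f4)
  finally show ?thesis .
qed

lemma centralizer_F4: "centralizer {0, mat 1, w, w + mat 1} = to_end2 ` {(A, mZ) | A. True}"
proof -
  have commute: "to_end2 x ** w = w ** to_end2 x \<longleftrightarrow> snd x = mZ" for x
  proof -
    have "to_end2 x ** w = w ** to_end2 x \<longleftrightarrow>
        to_end2 (emul x (msc W4, mZ)) = to_end2 (emul (msc W4, mZ) x)"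
      by (simp add: to_end2_emul to_end2_scalar)
    also have "\<dots> \<longleftrightarrow> snd x = mZ"
      using emul_omega_commute_iff by (cases x) (simp add: inj_to_end2 inj_eq)
    finally show ?thesis .
  qed
  have "centralizer {0, mat 1, w, w + mat 1} = {M. M ** w = w ** M}"
    by (auto simp: centralizer_def matrix_add_ldistrib matrix_add_rdistrib)
  also have "\<dots> = to_end2 ` {x. snd x = mZ}"
  proof (rule Set.set_eqI)
    fix M
    obtain x where "M = to_end2 x" using surj_to_end2 by (metis surjD)
    then show "M \<in> {M. M ** w = w ** M} \<longleftrightarrow> M \<in> to_end2 ` {x. snd x = mZ}"
      using commute by (simp add: inj_to_end2 inj_image_mem_iff)
  qed
  also have "{x. snd x = mZ} = {(A, mZ) | A. True}" by (auto intro: prod_eqI)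
  finally show ?thesis .
qed

lemma to_end2_econj:
  assumes "mdet g = 1"
  shows "to_end2 (econj g x) = to_end2 (g, mZ) ** to_end2 x ** matrix_inv (to_end2 (g, mZ))"
proof -
  have "matrix_inv (to_end2 (g, mZ)) = to_end2 (madj g, mZ)"
    using emul_madj[OF assms] by (intro matrix_inv_unique) (simp_all flip: to_end2_emul add: to_end2_one)
  then show ?thesis by (simp add: econj_def to_end2_emul)
qed

lemma group_eq_SL2:
  assumes G: "group (mat_monoid G)" and A5: "mat_monoid G \<cong> alt_group 5"
    and linear: "G \<subseteq> to_end2 ` {(A, mZ) | A. True}"
  shows "G = to_end2 ` {(A, mZ) | A. mdet A = 1}"
proof -
  define lin where "lin A = to_end2 (A, mZ)" for A
  have inj_lin: "inj lin" by (rule injI) (simp add: lin_def inj_to_end2 inj_eq)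
  have lin_mult: "lin (mmul A B) = lin A ** lin B" for A B
    by (simp only: lin_def emul_linear flip: to_end2_emul)
  have G_lin: "\<exists>A. g = lin A" if "g \<in> G" for g
    using that linear unfolding lin_def by blast
  have "range lin = to_end2 ` {(A, mZ) | A. True}"
    by (simp add: lin_def full_SetCompr_eq image_image)
  then have G_eq: "lin ` (lin -` G) = G" using linear by (simp add: image_vimage_eq Int_absorb2)
  have "card (lin ` (lin -` G)) = card (lin -` G)"
    by (rule card_image) (rule inj_on_subset[OF inj_lin subset_UNIV])
  moreover have "card G = 60"
    using card_iso_alt_group_5[OF A5] by (simp add: mat_monoid_def)
  ultimately have card_Gm: "card (lin -` G) = 60" using G_eq by simp
  define d where "d M = mdet (inv_into UNIV lin M)" for M
  have d_lin: "d (lin A) = mdet A" for A by (simp add: d_def inj_lin)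
  have "d g = 1" if "g \<in> G" for g
  proof (rule group.perfect_imp_mult_trivial[OF G perfect_if_iso_alt_group_5[OF G A5]])
    fix x y assume "x \<in> carrier (mat_monoid G)" "y \<in> carrier (mat_monoid G)"
    then have "x \<in> G" "y \<in> G" by (simp_all add: mat_monoid_def)
    then obtain A B where "x = lin A" "y = lin B" using G_lin by blast
    then show "d (x \<otimes>\<^bsub>mat_monoid G\<^esub> y) = d x * d y"
      by (simp add: mat_monoid_def d_lin mdet_mmul flip: lin_mult)
  next
    have "lin mI = mat 1" by (simp add: lin_def to_end2_one)
    then show "d \<one>\<^bsub>mat_monoid G\<^esub> = 1"
      using d_lin[of mI] by (simp add: mat_monoid_def mI_def)
  qed (use that in \<open>simp add: mat_monoid_def\<close>)
  then have "lin -` G \<subseteq> {A. mdet A = 1}" by (auto simp flip: d_lin)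
  then have SL: "lin -` G = {A. mdet A = 1}"
    using card_SL2_le card_Gm by (intro card_seteq) simp_all
  have "G = lin ` {A. mdet A = 1}" using G_eq unfolding SL by simp
  then show ?thesis by (auto simp: lin_def)
qed

lemma sl2_stable_vimage:
  assumes R: "f2_subalgebra R"
    and stable: "\<forall>u \<in> to_end2 ` {(A, mZ) | A. mdet A = 1}. \<forall>r\<in>R. u ** r ** matrix_inv u \<in> R"
  shows "sl2_stable (to_end2 -` R)"
  unfolding sl2_stable_def
proof (intro conjI ballI allI impI)
  show "(mZ, mZ) \<in> to_end2 -` R" "(mI, mZ) \<in> to_end2 -` R"
    using R by (simp_all add: f2_subalgebra_def to_end2_zero to_end2_one)
  show "eadd x y \<in> to_end2 -` R" "emul x y \<in> to_end2 -` R"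
    if "x \<in> to_end2 -` R" "y \<in> to_end2 -` R" for x y
    using that R by (simp_all add: f2_subalgebra_def to_end2_eadd to_end2_emul)
  show "econj g x \<in> to_end2 -` R" if "mdet g = 1" "x \<in> to_end2 -` R" for g x
  proof -
    have "to_end2 (g, mZ) \<in> to_end2 ` {(A, mZ) | A. mdet A = 1}" using that(1) by blast
    then show ?thesis using that stable by (simp add: to_end2_econj)
  qed
qed

end

lemma f4_frame_exists:
  assumes "w ** w = w + mat 1"
  shows "\<exists>v1 v2. f4_frame w v1 v2"
proof -
  have "range (\<lambda>a. f4_scalar w a *v axis 1 1) \<noteq> (UNIV :: vec2 set)"
  proof
    assume "range (\<lambda>a. f4_scalar w a *v axis 1 1) = (UNIV :: vec2 set)"
    moreover have "card (range (\<lambda>a. f4_scalar w a *v axis 1 1)) \<le> CARD(f4)"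
      by (rule card_image_le) simp
    ultimately show False by (simp add: card_f4 card_bit)
  qed
  then obtain v2 where "\<forall>a. v2 \<noteq> f4_scalar w a *v axis 1 1" by blast
  moreover have "axis 1 1 \<noteq> (0::vec2)" by (simp add: axis_eq_0_iff)
  ultimately show ?thesis using assms by (blast intro: f4_frame.intro)
qed

theorem theorem4p1:
  fixes G R :: "end2 set"
  assumes G_group: "group (mat_monoid G)"
    and G_A5: "mat_monoid G \<cong> alt_group 5"
    and simple: "simple_module G"
    and F4: "field (mat_ring (centralizer G)) \<and> card (centralizer G) = 4"
    and R_alg: "f2_subalgebra R"
    and R_stable: "\<forall>u\<in>G. \<forall>r\<in>R. u ** r ** matrix_inv u \<in> R"
  shows "R = {0, mat 1} \<or> R = centralizer G \<or>
         R = centralizer (centralizer G) \<or> R = UNIV"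
proof -
  obtain w where CG: "centralizer G = {0, mat 1, w, w + mat 1}" and "w ** w = w + mat 1"
    using field_of_four_matrices F4 by blast
  then obtain v1 v2 where "f4_frame w v1 v2" using f4_frame_exists by blast
  then interpret f4_frame w v1 v2 .
  have CCG: "centralizer (centralizer G) = to_end2 ` {(A, mZ) | A. True}"
    by (simp add: CG centralizer_F4)
  then have "G \<subseteq> to_end2 ` {(A, mZ) | A. True}" using subset_centralizer_centralizer by blast
  then have "G = to_end2 ` {(A, mZ) | A. mdet A = 1}" by (rule group_eq_SL2[OF G_group G_A5])
  then have stable: "sl2_stable (to_end2 -` R)" using sl2_stable_vimage R_alg R_stable by simp
  have R_eq: "to_end2 ` (to_end2 -` R) = R" by (simp add: surj_to_end2 surj_image_vimage_eq)
  from sl2_stable_cases[OF stable] show ?thesis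
  proof (elim disjE)
    assume "to_end2 -` R = {(mZ, mZ), (mI, mZ)}"
    then show ?thesis using R_eq by (simp add: to_end2_zero to_end2_one)
  next
    assume "to_end2 -` R = {(msc l, mZ) | l. True}"
    then show ?thesis using R_eq CG to_end2_scalars by simp
  next
    assume "to_end2 -` R = {(A, mZ) | A. True}"
    then show ?thesis using R_eq CCG by simp
  next
    assume "to_end2 -` R = UNIV"
    then show ?thesis using R_eq surj_to_end2 by simp
  qed
qed

end
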